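(* Let $\tau$ be any tiling of the plane by the Kari–Culik tileset $T$ described in the context, and let $u=(u_k)_{k\in\mathbb{Z}}$ be the sequence of numerical values of the colors along a horizontal line of $\tau$ (the top colors of the tiles $\tau(k,j)$, $k\in\mathbb{Z}$, for fixed $j$, with $0'$ counted as $0$). If the average of $u$ (the limit of averages over finite segments as their length tends to infinity) lies in the open interval $(\frac45,\frac{9}{10})$, then the words of the family $\{0\,1^{\alpha}\,0 : \alpha>3\}$ occur in $u$ with positive density, i.e. the set of positions $k$ at which some word $0\,1^{\alpha}\,0$ with $\alpha>3$ begins in $u$ has positive density in $\mathbb{Z}$.
   Context: A Wang tile is a unit square with a color on each side; a tiling of the plane assigns a tile to every cell of $\mathbb{Z}^2$ so that adjacent tiles have equal colors on their common side. The Kari–Culik tileset $T$ uses horizontal-edge (top/bottom) colors $0,0',1,2$ (with numerical values $0,0,1,2$) and vertical-edge colors from two disjoint state sets $\{s_0,s_1\}$ and $\{r_0,r_{1/3},r_{2/3}\}$. Writing a tile as (left, bottom, top, right), the 13 tiles are: $(s_0,0,0',s_0)$, $(s_1,0,0',s_1)$, $(s_0,1,2,s_0)$, $(s_1,1,2,s_1)$, $(s_0,1,1,s_1)$, $(s_1,0,1,s_0)$, $(s_1,0',1,s_0)$, $(r_0,2,1,r_{1/3})$, $(r_{1/3},2,1,r_{2/3})$, $(r_{1/3},1,0,r_0)$, $(r_{2/3},1,0,r_{1/3})$, $(r_0,1,1,r_{2/3})$, $(r_{2/3},2,0,r_0)$. Every horizontal line of every tiling has such an average. In the words $0\,1^\alpha\,0$,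 the letter $0$ stands for the value $0$ (color $0$ or $0'$). *)

theory Defs
  imports Complex_Main
begin

datatype hcol = H0 | H0' | H1 | H2
datatype vcol = S0 | S1 | R0 | R13 | R23

fun hval :: "hcol \<Rightarrow> int" where
  "hval H0 = 0" | "hval H0' = 0" | "hval H1 = 1" | "hval H2 = 2"

text \<open>A Wang tile written as (left, bottom, top, right).\<close>
type_synonym tile = "vcol \<times> hcol \<times> hcol \<times> vcol"

definition tleft :: "tile \<Rightarrow> vcol" where "tleft t = fst t"
definition tbot :: "tile \<Rightarrow> hcol" where "tbot t = fst (snd t)"
definition ttop :: "tile \<Rightarrow> hcol" where "ttop t = fst (snd (snd t))"
definition tright :: "tile \<Rightarrow> vcol" where "tright t = snd (snd (snd t))"

definition KC :: "tile set" where
  "KC = {(S0,H0,H0',S0), (S1,H0,H0',S1), (S0,H1,H2,S0), (S1,H1,H2,S1),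
         (S0,H1,H1,S1), (S1,H0,H1,S0), (S1,H0',H1,S0),
         (R0,H2,H1,R13), (R13,H2,H1,R23), (R13,H1,H0,R0),
         (R23,H1,H0,R13), (R0,H1,H1,R23), (R23,H2,H0,R0)}"

text \<open>A tiling of the plane: cell (k,j), k horizontal, j vertical (upwards).
  Adjacent tiles agree on their common side.\<close>
definition is_tiling :: "tile set \<Rightarrow> (int \<times> int \<Rightarrow> tile) \<Rightarrow> bool" where
  "is_tiling T \<tau> \<longleftrightarrow>
     (\<forall>k j. \<tau> (k, j) \<in> T) \<and>
     (\<forall>k j. tright (\<tau> (k, j)) = tleft (\<tau> (k + 1, j))) \<and>
     (\<forall>k j. ttop (\<tau> (k, j)) = tbot (\<tau> (k, j + 1)))"

definition has_average :: "(int \<Rightarrow> int) \<Rightarrow> real \<Rightarrow> bool" where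
  "has_average u L \<longleftrightarrow>
     (\<forall>\<epsilon>>0. \<exists>N::nat. \<forall>(a::int) (n::nat). n \<ge> N \<longrightarrow> n > 0 \<longrightarrow>
        \<bar>(\<Sum>k\<in>{a..<a + int n}. real_of_int (u k)) / real n - L\<bar> < \<epsilon>)"

definition pos_density :: "int set \<Rightarrow> bool" where
  "pos_density S \<longleftrightarrow>
     (\<exists>c::real. c > 0 \<and> (\<exists>N::nat. \<forall>(a::int) (n::nat). n \<ge> N \<longrightarrow>
        real (card (S \<inter> {a..<a + int n})) \<ge> c * real n))"

definition word_at :: "(int \<Rightarrow> int) \<Rightarrow> nat \<Rightarrow> int \<Rightarrow> bool" where
  "word_at u \<alpha> k \<longleftrightarrow>
     u k = 0 \<and> (\<forall>i::nat. 1 \<le> i \<and> i \<le> \<alpha> \<longrightarrow> u (k + int i) = 1) \<and>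
     u (k + int \<alpha> + 1) = 0"

end

theory Submission
  imports Defs
begin

text \<open>An average below 1 forces a zero in every long enough segment of the line. In the row
  above, a colour 0 sits under an s-tile and a colour 2 under an r-tile, and s- and r-states
  cannot meet along a row, so the line takes only the values 0 and 1. If a long segment
  contained no word \<open>0 1\<^sup>\<alpha> 0\<close> with \<open>\<alpha> > 3\<close>, every position after its first zero would lie
  at most 3 after a zero, so the segment would have average at most about 3/4 < 4/5.
  Hence such words occur in every segment of some fixed length, which gives positive density.\<close>

definition syndetic :: "nat \<Rightarrow> int set \<Rightarrow> bool" where
  "syndetic K S \<longleftrightarrow> (\<forall>a. \<exists>k\<in>S. a \<le> k \<and> k < a + int K)"

lemma syndetic_pos: "syndetic K S \<Longrightarrow> K > 0"
  unfolding syndetic_def by (metis add.right_neutral linorder_not_less of_nat_0 gr0I)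

lemma syndetic_card_window:
  assumes "syndetic K S"
  shows "m \<le> card (S \<inter> {a..<a + int (m * K)})"
proof (induction m)
  case 0 show ?case by simp
next
  case (Suc m)
  obtain k where k: "k \<in> S" "a + int (m * K) \<le> k" "k < a + int (m * K) + int K"
    using assms unfolding syndetic_def by blast
  have "insert k (S \<inter> {a..<a + int (m * K)}) \<subseteq> S \<inter> {a..<a + int (Suc m * K)}"
    using k by (auto simp del: of_nat_mult)
  then have "card (insert k (S \<inter> {a..<a + int (m * K)})) \<le> card (S \<inter> {a..<a + int (Suc m * K)})"
    by (intro card_mono) auto
  moreover have "k \<notin> S \<inter> {a..<a + int (m * K)}" using k by auto
  ultimately show ?case using Suc.IH by simp
qed

lemma syndetic_imp_pos_density:
  assumes "syndetic K S"
  shows "pos_density S"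
  unfolding pos_density_def
proof (intro exI conjI allI impI)
  have K: "K > 0" using assms by (rule syndetic_pos)
  then show "1 / (2 * real K) > 0" by simp
  fix a :: int and n :: nat
  assume n: "2 * K \<le> n"
  define m where "m = n div K"
  have "m * K \<le> n" "n < m * K + K"
    unfolding m_def using K div_mult_mod_eq [of n K] mod_less_divisor [of K n] by linarith+
  moreover have "m \<noteq> 0" using \<open>n < m * K + K\<close> n by (cases m) auto
  then have "K \<le> m * K" by simp
  ultimately have "n \<le> 2 * (m * K)" by linarith
  then have "real n \<le> 2 * real K * real m" by (metis of_nat_le_iff of_nat_mult of_nat_numeral mult.commute mult.assoc)
  then have "1 / (2 * real K) * real n \<le> real m" using K by (simp add: field_simps)
  also have "m \<le> card (S \<inter> {a..<a + int (m * K)})" by (rule syndetic_card_window [OF assms])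
  also have "\<dots> \<le> card (S \<inter> {a..<a + int n})"
    using \<open>m * K \<le> n\<close> by (intro card_mono) (auto simp del: of_nat_mult)
  finally show "1 / (2 * real K) * real n \<le> real (card (S \<inter> {a..<a + int n}))" by simp
qed

lemma has_averageD:
  assumes "has_average u L" and "\<epsilon> > 0"
  obtains N :: nat where "N > 0"
    and "\<And>a n. N \<le> n \<Longrightarrow> \<bar>(\<Sum>k\<in>{a..<a + int n}. real_of_int (u k)) / real n - L\<bar> < \<epsilon>"
proof -
  obtain N :: nat where N: "\<And>a n. N \<le> n \<Longrightarrow> 0 < n \<Longrightarrow>
      \<bar>(\<Sum>k\<in>{a..<a + int n}. real_of_int (u k)) / real n - L\<bar> < \<epsilon>"
    using assms unfolding has_average_def by blast
  show thesis by (rule that [of "max N 1"]) (use N in auto)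
qed

lemma syndetic_zeros_if_average_less_1:
  fixes u :: "int \<Rightarrow> int"
  assumes "has_average u L" and "L < 1" and nonneg: "\<And>k. 0 \<le> u k"
  obtains N where "syndetic N {k. u k = 0}"
proof -
  obtain N where N: "N > 0"
    "\<And>a n. N \<le> n \<Longrightarrow> \<bar>(\<Sum>k\<in>{a..<a + int n}. real_of_int (u k)) / real n - L\<bar> < 1 - L"
    using has_averageD [OF assms(1)] \<open>L < 1\<close> by (metis diff_gt_0_iff_gt)
  have "syndetic N {k. u k = 0}"
    unfolding syndetic_def
  proof (rule allI, rule ccontr)
    fix a
    assume "\<not> (\<exists>k\<in>{k. u k = 0}. a \<le> k \<and> k < a + int N)"
    then have "\<And>k. k \<in> {a..<a + int N} \<Longrightarrow> 1 \<le> u k"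
      using nonneg by (force simp: order.order_iff_strict)
    then have "\<And>k. k \<in> {a..<a + int N} \<Longrightarrow> 1 \<le> real_of_int (u k)" by simp
    then have "real N \<le> (\<Sum>k\<in>{a..<a + int N}. real_of_int (u k))"
      using sum_mono [of "{a..<a + int N}" "\<lambda>_. 1::real"] by simp
    then have "1 \<le> (\<Sum>k\<in>{a..<a + int N}. real_of_int (u k)) / real N"
      using N(1) by simp
    then show False using N(2) [of N a] by linarith
  qed
  then show thesis by (rule that)
qed

lemma int_shift_invariant_const:
  fixes P :: "int \<Rightarrow> bool"
  assumes "\<And>k. P (k + 1) = P k"
  shows "P k = P 0"
proof (induct k rule: int_induct [where k = 0])
  case (step2 i) then show ?case using assms [of "i - 1"] by simp
qed (use assms in simp_all)

lemma KC_state_kind_constant_in_row: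
  assumes "is_tiling KC \<tau>"
  shows "(tleft (\<tau> (k, j)) \<in> {S0, S1}) = (tleft (\<tau> (k', j)) \<in> {S0, S1})"
proof -
  have "(tleft (\<tau> (k + 1, j)) \<in> {S0, S1}) = (tleft (\<tau> (k, j)) \<in> {S0, S1})" for k
  proof -
    have "\<tau> (k, j) \<in> KC" "tright (\<tau> (k, j)) = tleft (\<tau> (k + 1, j))"
      using assms unfolding is_tiling_def by auto
    then show ?thesis unfolding KC_def tleft_def tright_def by auto
  qed
  then show ?thesis
    using int_shift_invariant_const [of "\<lambda>k. tleft (\<tau> (k, j)) \<in> {S0, S1}"] by metis
qed

lemma KC_no_2_in_row_with_0:
  assumes "is_tiling KC \<tau>" and "hval (ttop (\<tau> (k', j))) = 0"
  shows "ttop (\<tau> (k, j)) \<noteq> H2"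
proof
  assume "ttop (\<tau> (k, j)) = H2"
  have in_KC: "\<tau> (i, j + 1) \<in> KC" for i using assms(1) unfolding is_tiling_def by blast
  have bot: "tbot (\<tau> (i, j + 1)) = ttop (\<tau> (i, j))" for i
    using assms(1) unfolding is_tiling_def by simp
  have "tbot (\<tau> (k, j + 1)) = H2" using bot \<open>ttop (\<tau> (k, j)) = H2\<close> by simp
  then have "tleft (\<tau> (k, j + 1)) \<notin> {S0, S1}"
    using in_KC [of k] unfolding KC_def tleft_def tbot_def by auto
  moreover have "tbot (\<tau> (k', j + 1)) \<in> {H0, H0'}"
    using bot assms(2) by (cases "ttop (\<tau> (k', j))") auto
  then have "tleft (\<tau> (k', j + 1)) \<in> {S0, S1}"
    using in_KC [of k'] unfolding KC_def tleft_def tbot_def by auto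
  ultimately show False using KC_state_kind_constant_in_row [OF assms(1)] by blast
qed

lemma next_zero_within_4:
  fixes u :: "int \<Rightarrow> int"
  assumes u01: "\<And>k. u k = 0 \<or> u k = 1"
    and "u z = 0" and "u z' = 0" and "z < z'"
    and short: "\<And>\<alpha>. 3 < \<alpha> \<Longrightarrow> \<not> word_at u \<alpha> z"
  shows "\<exists>d\<in>{1..4}. u (z + d) = 0"
proof -
  define P where "P d \<longleftrightarrow> 0 < d \<and> u (z + int d) = 0" for d
  define d where "d = (LEAST d. P d)"
  have "P (nat (z' - z))" unfolding P_def using assms(3,4) by simp
  then have "P d" unfolding d_def by (rule LeastI)
  have ones: "u (z + int i) = 1" if "0 < i" "i < d" for i
    using not_less_Least [of i P] u01 [of "z + int i"] that unfolding d_def P_def by auto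
  have "word_at u (d - 1) z"
    unfolding word_at_def using \<open>P d\<close> ones assms(2) unfolding P_def
    by (auto simp: of_nat_diff)
  then have "d \<le> 4" using short [of "d - 1"] by linarith
  then show ?thesis using \<open>P d\<close> unfolding P_def by (intro bexI [of _ "int d"]) auto
qed

lemma last_zero_within_3:
  fixes u :: "int \<Rightarrow> int"
  assumes u01: "\<And>k. u k = 0 \<or> u k = 1"
    and later_zero: "\<And>z. \<exists>z'>z. u z' = 0"
    and short: "\<And>z \<alpha>. z \<in> W \<Longrightarrow> 3 < \<alpha> \<Longrightarrow> \<not> word_at u \<alpha> z"
    and "u x = 0" and "x \<le> i" and "{x..i} \<subseteq> W"
  shows "\<exists>z\<in>W. u z = 0 \<and> z \<le> i \<and> i < z + 4"
proof -
  define Z where "Z = {x..i} \<inter> {z. u z = 0}"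
  define z where "z = Max Z"
  have "finite Z" "x \<in> Z" unfolding Z_def using assms(4,5) by simp_all
  then have "z \<in> Z" and z_max: "\<And>y. y \<in> Z \<Longrightarrow> y \<le> z"
    unfolding z_def by (auto intro: Max_in)
  then have "z \<in> W" "u z = 0" "z \<le> i" using assms(6) unfolding Z_def by auto
  obtain z' where "z < z'" "u z' = 0" using later_zero by blast
  then obtain d where d: "d \<in> {1..4}" "u (z + d) = 0"
    using next_zero_within_4 [of u z z', OF u01 \<open>u z = 0\<close>] short [OF \<open>z \<in> W\<close>] by blast
  have "i < z + d"
  proof (rule ccontr)
    assume "\<not> i < z + d"
    then have "z + d \<in> Z" using \<open>z \<in> Z\<close> d unfolding Z_def by auto
    then show False using z_max d(1) by fastforce
  qed
  then show ?thesis using \<open>z \<in> W\<close> \<open>u z = 0\<close> \<open>z \<le> i\<close> d(1) by auto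
qed

lemma sum_01_eq_card:
  fixes u :: "int \<Rightarrow> int"
  assumes "finite W" and "\<And>k. u k = 0 \<or> u k = 1"
  shows "(\<Sum>k\<in>W. u k) = int (card W) - int (card (W \<inter> {k. u k = 0}))"
proof -
  have "(\<Sum>k\<in>W. u k) = (\<Sum>k\<in>W. 1 - (if u k = 0 then 1 else 0))"
    using assms(2) by (intro sum.cong) (simp, metis diff_0_right diff_self)
  also have "\<dots> = int (card W) - int (card (W \<inter> {k. u k = 0}))"
    using assms(1) by (simp add: sum_subtractf sum.If_cases)
  finally show ?thesis .
qed

text \<open>Every position of the window lies at most 3 after a zero of the window, except for
  those before the first zero, of which there are fewer than \<open>N\<close>.\<close>
lemma sum_bound_without_long_words:
  fixes u :: "int \<Rightarrow> int"
  assumes u01: "\<And>k. u k = 0 \<or> u k = 1"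
    and zeros: "syndetic N {k. u k = 0}"
    and short: "\<And>z \<alpha>. z \<in> {a..<a + int n} \<Longrightarrow> 3 < \<alpha> \<Longrightarrow> \<not> word_at u \<alpha> z"
  shows "4 * (\<Sum>k\<in>{a..<a + int n}. u k) \<le> 3 * int n + int N"
proof -
  define W where "W = {a..<a + int n}"
  define Z where "Z = W \<inter> {z. u z = 0}"
  have later_zero: "\<exists>z'>z. u z' = 0" for z
  proof -
    obtain z' where "u z' = 0" "z + 1 \<le> z'" using zeros unfolding syndetic_def by blast
    then show ?thesis by (intro exI [of _ z']) simp
  qed
  obtain x where x: "u x = 0" "a \<le> x" "x < a + int N"
    using zeros unfolding syndetic_def by blast
  have "W \<subseteq> {a..<a + int N} \<union> (\<Union>z\<in>Z. {z..<z + 4})"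
  proof
    fix i assume "i \<in> W"
    show "i \<in> {a..<a + int N} \<union> (\<Union>z\<in>Z. {z..<z + 4})"
    proof (cases "x \<le> i")
      case True
      then have "{x..i} \<subseteq> W" using \<open>i \<in> W\<close> x(2) unfolding W_def by auto
      then show ?thesis
        using last_zero_within_3 [OF u01 later_zero short [folded W_def] x(1) True] Z_def by auto
    qed (use \<open>i \<in> W\<close> x in \<open>auto simp: W_def\<close>)
  qed
  then have "card W \<le> card ({a..<a + int N} \<union> (\<Union>z\<in>Z. {z..<z + 4}))"
    by (intro card_mono) (auto simp: Z_def W_def)
  also have "\<dots> \<le> card {a..<a + int N} + card (\<Union>z\<in>Z. {z..<z + 4})"
    by (rule card_Un_le)
  also have "card (\<Union>z\<in>Z. {z..<z + 4}) \<le> (\<Sum>z\<in>Z. card {z..<z + 4})"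
    by (rule card_UN_le) (simp add: Z_def W_def)
  also have "(\<Sum>z\<in>Z. card {z..<z + 4}) = 4 * card Z" by simp
  finally have "n \<le> N + 4 * card Z" by (simp add: W_def)
  moreover have "(\<Sum>k\<in>W. u k) = int n - int (card Z)"
    using sum_01_eq_card [OF _ u01] unfolding W_def Z_def by simp
  ultimately show ?thesis unfolding W_def by linarith
qed

lemma syndetic_long_words:
  fixes u :: "int \<Rightarrow> int"
  assumes u01: "\<And>k. u k = 0 \<or> u k = 1"
    and zeros: "syndetic N {k. u k = 0}"
    and avg: "has_average u L" and "3/4 < L"
  obtains K where "syndetic K {k. \<exists>\<alpha>>3. word_at u \<alpha> k}"
proof -
  define \<epsilon> where "\<epsilon> = (L - 3/4) / 2"
  have "\<epsilon> > 0" using \<open>3/4 < L\<close> unfolding \<epsilon>_def by simp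
  obtain N' where N': "N' > 0"
    "\<And>a n. N' \<le> n \<Longrightarrow> \<bar>(\<Sum>k\<in>{a..<a + int n}. real_of_int (u k)) / real n - L\<bar> < \<epsilon>"
    using has_averageD [OF avg \<open>\<epsilon> > 0\<close>] by blast
  define K where "K = N' + nat \<lceil>real N / \<epsilon>\<rceil>"
  have "N' \<le> K" "K > 0" unfolding K_def using N'(1) by auto
  have "real N / \<epsilon> \<le> real K" unfolding K_def by linarith
  then have "real N \<le> \<epsilon> * real K" using \<open>\<epsilon> > 0\<close> by (simp add: field_simps)
  have "syndetic K {k. \<exists>\<alpha>>3. word_at u \<alpha> k}"
    unfolding syndetic_def
  proof (rule allI, rule ccontr)
    fix a
    define s where "s = (\<Sum>k\<in>{a..<a + int K}. real_of_int (u k))"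
    assume "\<not> (\<exists>k\<in>{k. \<exists>\<alpha>>3. word_at u \<alpha> k}. a \<le> k \<and> k < a + int K)"
    then have "4 * (\<Sum>k\<in>{a..<a + int K}. u k) \<le> 3 * int K + int N"
      by (intro sum_bound_without_long_words [OF u01 zeros]) auto
    then have "real_of_int (4 * (\<Sum>k\<in>{a..<a + int K}. u k)) \<le> real_of_int (3 * int K + int N)"
      by (simp only: of_int_le_iff)
    then have "4 * s \<le> 3 * real K + real N" unfolding s_def by simp
    moreover have "\<bar>s / real K - L\<bar> < \<epsilon>" unfolding s_def using N'(2) \<open>N' \<le> K\<close> by blast
    then have "(L - \<epsilon>) * real K < s" using \<open>K > 0\<close> by (simp add: field_simps abs_less_iff)
    moreover have "L = 3/4 + 2 * \<epsilon>" unfolding \<epsilon>_def by (simp add: field_simps)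
    ultimately have "4 * (\<epsilon> * real K) < real N" by (simp add: algebra_simps)
    then show False using \<open>real N \<le> \<epsilon> * real K\<close> \<open>\<epsilon> > 0\<close> \<open>K > 0\<close> by simp
  qed
  then show thesis by (rule that)
qed

theorem mainTheorem5:
  fixes \<tau> :: "int \<times> int \<Rightarrow> tile" and j :: int and L :: real
  assumes "is_tiling KC \<tau>"
    and "has_average (\<lambda>k. hval (ttop (\<tau> (k, j)))) L"
    and "4/5 < L" and "L < 9/10"
  shows "pos_density {k. \<exists>\<alpha>::nat. \<alpha> > 3 \<and> word_at (\<lambda>k. hval (ttop (\<tau> (k, j)))) \<alpha> k}"
proof -
  define u where "u k = hval (ttop (\<tau> (k, j)))" for k
  have "0 \<le> u k" for k unfolding u_def by (cases "ttop (\<tau> (k, j))") auto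
  then obtain N where zeros: "syndetic N {k. u k = 0}"
    using syndetic_zeros_if_average_less_1 [of u L] assms(2,4) unfolding u_def by force
  then obtain z where "u z = 0" unfolding syndetic_def by blast
  then have "ttop (\<tau> (k, j)) \<noteq> H2" for k
    using KC_no_2_in_row_with_0 [OF assms(1)] unfolding u_def by blast
  then have u01: "u k = 0 \<or> u k = 1" for k unfolding u_def by (cases "ttop (\<tau> (k, j))") auto
  obtain K where "syndetic K {k. \<exists>\<alpha>>3. word_at u \<alpha> k}"
    using syndetic_long_words [OF u01 zeros] assms(2,3) unfolding u_def by force
  then show ?thesis unfolding u_def by (rule syndetic_imp_pos_density)
qed

end
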